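(* Let $\ast$ be a continuous $t$-norm and let $\{(X_n,M_n,\ast)\}_{n\in\mathbb N}$ be a sequence of nonempty compact non-Archimedean fuzzy metric spaces satisfying: (1) $\ast$ satisfies (TN1); (2) there exists a nondecreasing left-continuous function $C:(0,\infty)\to(0,1]$ with $0<C(s)\le\mathrm{diam}_s(X_n)$ for all $s>0$ and all $n$; (3) for every $t>0$ and $0<\varepsilon<1$ there is $N(\varepsilon,t)\in\mathbb N$ with $\mathrm{Cov}(X_n,\varepsilon,t)\le N(\varepsilon,t)$ for all $n$; (4) for every $t>0$ and $0<\varepsilon<1$, with $N=N(\varepsilon,t)$, there exist, for each $n$, a $(t,\varepsilon)$-net $\{x_i^n\}_{i=1}^N$ in $X_n$ such that for all $n,m$, all $s>t$ and all $i,j\in\{1,\dots,N\}$: if $M_n(x_i^n,x_j^n,s)<M_m(x_i^m,x_j^m,s)$ then $\dfrac{M_n(x_i^n,x_j^n,s)}{M_m(x_i^m,x_j^m,s)\ast(1-\varepsilon)}\ge\dfrac{M_n(x_i^n,x_j^n,t)}{M_m(x_i^m,x_j^m,t)\ast(1-\varepsilon)}$. Then $\{(X_n,M_n,\ast)\}_{n}$ has a Cauchy subsequence with respect to $M_{GH}$.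
   Context: A continuous $t$-norm is a binary operation $\ast:[0,1]\times[0,1]\to[0,1]$ which is associative, commutative, continuous, satisfies $a\ast 1=a$ for all $a$, and is monotone. Property (TN1): $a-a\ast b\ge a\ast(1-b)$ for all $a,b\in[0,1]$. A fuzzy metric space $(X,M,\ast)$: $M:X\times X\times[0,\infty)\to[0,1]$ with, for all $x,y,z$ and $t,s>0$: (KM1) $M(x,y,0)=0$; (KM2) $M(x,y,t)=1$ for all $t>0$ iff $x=y$; (KM3) $M(x,y,t)=M(y,x,t)$; (KM4) $M(x,y,t)\ast M(y,z,s)\le M(x,z,t+s)$; (KM5) $M(x,y,\cdot)$ left continuous on $[0,\infty)$. Non-Archimedean: $M(x,z,\max\{t,s\})\ge M(x,y,t)\ast M(y,z,s)$. Balls $B(x,\varepsilon,t)=\{y: M(x,y,t)>1-\varepsilon\}$ generate the topology; "compact" refers to it. $H_M(A,B,t)=\min\{\inf_{a\in A}\sup_{b\in B}M(a,b,t),\ \inf_{b\in B}\sup_{a\in A}M(a,b,t)\}$ for nonempty compact $A,B$. A fuzzy metric on $X\sqcup Y$ is admissible if it restricts to the given ones on $X$ and $Y$; $M_{GH}(X,Y,t)=\sup\{H_M(X,Y,t): M$ admissible non-Archimedean fuzzy metric on $X\sqcup Y$ with $t$-norm $\ast\}$. A sequence $(X_n)$ is Cauchy w.r.t. $M_{GH}$ if for every $t>0$, $0<\varepsilon<1$ there is $n_0$ with $M_{GH}(X_n,X_m,t)>1-\varepsilon$ for all $n,m\ge n_0$. A family $\{x_i\}_{i=1}^N$ is a $(t,\varepsilon)$-net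 in $X$ if each $x\in X$ has some $i$ with $M(x,x_i,t)>1-\varepsilon$. $\mathrm{Cov}(X,\varepsilon,t)$ is the minimal cardinality of $C\subseteq X$ with $X=\bigcup_{c\in C}B(c,\varepsilon,t)$. $\mathrm{diam}_s(X)=\inf\{M(x,y,s):x,y\in X\}$. *)

theory Defs
  imports "HOL-Analysis.Analysis"
begin

text \<open>Continuous t-norm on [0,1] (values outside [0,1] are irrelevant).\<close>
definition cont_tnorm :: "(real \<Rightarrow> real \<Rightarrow> real) \<Rightarrow> bool" where
  "cont_tnorm T \<longleftrightarrow>
     (\<forall>a\<in>{0..1}. \<forall>b\<in>{0..1}. T a b \<in> {0..1}) \<and>
     (\<forall>a\<in>{0..1}. \<forall>b\<in>{0..1}. \<forall>c\<in>{0..1}. T (T a b) c = T a (T b c)) \<and>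
     (\<forall>a\<in>{0..1}. \<forall>b\<in>{0..1}. T a b = T b a) \<and>
     continuous_on ({0..1} \<times> {0..1}) (\<lambda>(a, b). T a b) \<and>
     (\<forall>a\<in>{0..1}. T a 1 = a) \<and>
     (\<forall>a\<in>{0..1}. \<forall>b\<in>{0..1}. \<forall>c\<in>{0..1}. \<forall>d\<in>{0..1}.
        a \<le> c \<longrightarrow> b \<le> d \<longrightarrow> T a b \<le> T c d)"

definition TN1 :: "(real \<Rightarrow> real \<Rightarrow> real) \<Rightarrow> bool" where
  "TN1 T \<longleftrightarrow> (\<forall>a\<in>{0..1}. \<forall>b\<in>{0..1}. a - T a b \<ge> T a (1 - b))"

text \<open>Fuzzy metric space (X, M, T) (Kramosil--Michalek style, KM1--KM5), on a carrier set X.\<close>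
definition fuzzy_metric :: "'a set \<Rightarrow> ('a \<Rightarrow> 'a \<Rightarrow> real \<Rightarrow> real) \<Rightarrow> (real \<Rightarrow> real \<Rightarrow> real) \<Rightarrow> bool" where
  "fuzzy_metric X M T \<longleftrightarrow>
     (\<forall>x\<in>X. \<forall>y\<in>X. \<forall>t\<ge>0. 0 \<le> M x y t \<and> M x y t \<le> 1) \<and>
     (\<forall>x\<in>X. \<forall>y\<in>X. M x y 0 = 0) \<and>
     (\<forall>x\<in>X. \<forall>y\<in>X. (\<forall>t>0. M x y t = 1) \<longleftrightarrow> x = y) \<and>
     (\<forall>x\<in>X. \<forall>y\<in>X. \<forall>t>0. M x y t = M y x t) \<and>
     (\<forall>x\<in>X. \<forall>y\<in>X. \<forall>z\<in>X. \<forall>t>0. \<forall>s>0. T (M x y t) (M y z s) \<le> M x z (t + s)) \<and>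
     (\<forall>x\<in>X. \<forall>y\<in>X. \<forall>t>0. (M x y \<longlongrightarrow> M x y t) (at_left t))"

definition na_fuzzy_metric :: "'a set \<Rightarrow> ('a \<Rightarrow> 'a \<Rightarrow> real \<Rightarrow> real) \<Rightarrow> (real \<Rightarrow> real \<Rightarrow> real) \<Rightarrow> bool" where
  "na_fuzzy_metric X M T \<longleftrightarrow> fuzzy_metric X M T \<and>
     (\<forall>x\<in>X. \<forall>y\<in>X. \<forall>z\<in>X. \<forall>t>0. \<forall>s>0. M x z (max t s) \<ge> T (M x y t) (M y z s))"

definition fball :: "'a set \<Rightarrow> ('a \<Rightarrow> 'a \<Rightarrow> real \<Rightarrow> real) \<Rightarrow> 'a \<Rightarrow> real \<Rightarrow> real \<Rightarrow> 'a set" where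
  "fball X M x e t = {y\<in>X. M x y t > 1 - e}"

definition fopen :: "'a set \<Rightarrow> ('a \<Rightarrow> 'a \<Rightarrow> real \<Rightarrow> real) \<Rightarrow> 'a set \<Rightarrow> bool" where
  "fopen X M U \<longleftrightarrow> U \<subseteq> X \<and>
     (\<forall>x\<in>U. \<exists>e t. 0 < e \<and> e < 1 \<and> 0 < t \<and> fball X M x e t \<subseteq> U)"

definition fcompact :: "'a set \<Rightarrow> ('a \<Rightarrow> 'a \<Rightarrow> real \<Rightarrow> real) \<Rightarrow> 'a set \<Rightarrow> bool" where
  "fcompact X M K \<longleftrightarrow> K \<subseteq> X \<and>
     (\<forall>\<U>. (\<forall>U\<in>\<U>. fopen X M U) \<and> K \<subseteq> \<Union>\<U> \<longrightarrow>
        (\<exists>\<F>\<subseteq>\<U>. finite \<F> \<and> K \<subseteq> \<Union>\<F>))"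

definition H_M :: "('b \<Rightarrow> 'b \<Rightarrow> real \<Rightarrow> real) \<Rightarrow> 'b set \<Rightarrow> 'b set \<Rightarrow> real \<Rightarrow> real" where
  "H_M M A B t = min (INF a\<in>A. SUP b\<in>B. M a b t) (INF b\<in>B. SUP a\<in>A. M a b t)"

text \<open>Admissible fuzzy metric on the disjoint union X \<squnion> Y (realised as Inl ` X \<union> Inr ` Y).\<close>
definition admissible ::
  "'a set \<Rightarrow> ('a \<Rightarrow> 'a \<Rightarrow> real \<Rightarrow> real) \<Rightarrow> 'a set \<Rightarrow> ('a \<Rightarrow> 'a \<Rightarrow> real \<Rightarrow> real) \<Rightarrow>
   (real \<Rightarrow> real \<Rightarrow> real) \<Rightarrow> ('a + 'a \<Rightarrow> 'a + 'a \<Rightarrow> real \<Rightarrow> real) \<Rightarrow> bool" where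
  "admissible X MX Y MY T Mu \<longleftrightarrow>
     na_fuzzy_metric (Inl ` X \<union> Inr ` Y) Mu T \<and>
     (\<forall>a\<in>X. \<forall>b\<in>X. \<forall>t\<ge>0. Mu (Inl a) (Inl b) t = MX a b t) \<and>
     (\<forall>a\<in>Y. \<forall>b\<in>Y. \<forall>t\<ge>0. Mu (Inr a) (Inr b) t = MY a b t)"

definition M_GH ::
  "(real \<Rightarrow> real \<Rightarrow> real) \<Rightarrow> 'a set \<Rightarrow> ('a \<Rightarrow> 'a \<Rightarrow> real \<Rightarrow> real) \<Rightarrow> 'a set \<Rightarrow>
   ('a \<Rightarrow> 'a \<Rightarrow> real \<Rightarrow> real) \<Rightarrow> real \<Rightarrow> real" where
  "M_GH T X MX Y MY t =
     Sup {H_M Mu (Inl ` X) (Inr ` Y) t | Mu. admissible X MX Y MY T Mu}"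

definition fnet :: "'a set \<Rightarrow> ('a \<Rightarrow> 'a \<Rightarrow> real \<Rightarrow> real) \<Rightarrow> real \<Rightarrow> real \<Rightarrow> nat \<Rightarrow> (nat \<Rightarrow> 'a) \<Rightarrow> bool" where
  "fnet X M t e N x \<longleftrightarrow> (\<forall>i\<in>{1..N}. x i \<in> X) \<and>
     (\<forall>y\<in>X. \<exists>i\<in>{1..N}. M y (x i) t > 1 - e)"

definition Cov :: "'a set \<Rightarrow> ('a \<Rightarrow> 'a \<Rightarrow> real \<Rightarrow> real) \<Rightarrow> real \<Rightarrow> real \<Rightarrow> nat" where
  "Cov X M e t = (LEAST n. \<exists>C\<subseteq>X. finite C \<and> card C = n \<and> X = (\<Union>c\<in>C. fball X M c e t))"

definition fdiam :: "'a set \<Rightarrow> ('a \<Rightarrow> 'a \<Rightarrow> real \<Rightarrow> real) \<Rightarrow> real \<Rightarrow> real" where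
  "fdiam X M s = Inf {M x y s | x y. x \<in> X \<and> y \<in> X}"

end

theory Submission
  imports Defs
begin

text \<open>Fix scales \<open>\<tau>\<^sub>k \<rightarrow> 0\<close> with tolerances \<open>\<delta>\<^sub>k \<le> \<tau>\<^sub>k\<close> and take the nets of hypothesis (4)
  at each scale. All net distances lie in \<open>[0,1]\<close>, so a single diagonal subsequence makes every
  \<open>M\<^sub>n(x\<^sub>i\<^sup>n, x\<^sub>j\<^sup>n, \<tau>\<^sub>k)\<close> converge. The limits are at least \<open>C(\<tau>\<^sub>k) > 0\<close>, and (TN1) gives
  \<open>L \<star> (1 - \<delta>) < L\<close> for \<open>L > 0\<close>, so along the subsequence the net distances at time \<open>\<tau>\<^sub>k\<close> are
  eventually \<open>(1 - \<delta>\<^sub>k)\<close>-close; the ratio condition of (4) carries this closeness over to every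
  time \<open>u > \<tau>\<^sub>k\<close>. Two spaces with mutually close nets glue into one non-Archimedean fuzzy
  metric space by joining \<open>a\<close> and \<open>b\<close> through the best pair of corresponding net points, and there
  every point is \<open>(1 - \<delta>\<^sub>k) \<star> (1 - \<delta>\<^sub>k)\<close>-close to the other space at any time \<open>t > \<tau>\<^sub>k\<close>.
  So \<open>M\<^sub>G\<^sub>H\<close> is eventually at least \<open>(1 - \<delta>\<^sub>k) \<star> (1 - \<delta>\<^sub>k)\<close>, which tends to \<open>1\<close>.\<close>

section \<open>Continuous t-norms\<close>

definition clamp01 :: "real \<Rightarrow> real" where
  "clamp01 x = max 0 (min 1 x)"

lemma clamp01_in_unit: "clamp01 x \<in> {0..1}"
  by (simp add: clamp01_def)

lemma clamp01_id: "x \<in> {0..1} \<Longrightarrow> clamp01 x = x"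
  by (auto simp: clamp01_def)

lemma clamp01_bounds [simp]: "0 \<le> clamp01 x" "clamp01 x \<le> 1"
  by (simp_all add: clamp01_def)

lemma clamp01_mono: "x \<le> y \<Longrightarrow> clamp01 x \<le> clamp01 y"
  by (auto simp: clamp01_def)

locale continuous_tnorm =
  fixes T :: "real \<Rightarrow> real \<Rightarrow> real"
  assumes cont_tnorm: "cont_tnorm T"
begin

lemma T_in_unit: "a \<in> {0..1} \<Longrightarrow> b \<in> {0..1} \<Longrightarrow> T a b \<in> {0..1}"
  using cont_tnorm unfolding cont_tnorm_def by blast

lemma T_assoc: "a \<in> {0..1} \<Longrightarrow> b \<in> {0..1} \<Longrightarrow> c \<in> {0..1} \<Longrightarrow> T (T a b) c = T a (T b c)"
  using cont_tnorm unfolding cont_tnorm_def by blast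

lemma T_commute: "a \<in> {0..1} \<Longrightarrow> b \<in> {0..1} \<Longrightarrow> T a b = T b a"
  using cont_tnorm unfolding cont_tnorm_def by blast

lemma T_one: "a \<in> {0..1} \<Longrightarrow> T a 1 = a"
  using cont_tnorm unfolding cont_tnorm_def by blast

lemma T_mono:
  "a \<in> {0..1} \<Longrightarrow> b \<in> {0..1} \<Longrightarrow> c \<in> {0..1} \<Longrightarrow> d \<in> {0..1} \<Longrightarrow>
    a \<le> c \<Longrightarrow> b \<le> d \<Longrightarrow> T a b \<le> T c d"
  using cont_tnorm unfolding cont_tnorm_def by blast

lemma continuous_on_T: "continuous_on ({0..1} \<times> {0..1}) (\<lambda>(a, b). T a b)"
  using cont_tnorm unfolding cont_tnorm_def by blast

text \<open>Clamping the arguments into \<open>[0,1]\<close> makes \<open>T\<close> a total commutative semigroup operation on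
  \<open>real\<close>, so ac-rewriting applies without range side conditions.\<close>
definition tmul :: "real \<Rightarrow> real \<Rightarrow> real"  (infixl \<open>\<star>\<close> 70) where
  "a \<star> b = T (clamp01 a) (clamp01 b)"

lemma tmul_eq_T: "a \<in> {0..1} \<Longrightarrow> b \<in> {0..1} \<Longrightarrow> a \<star> b = T a b"
  by (simp add: tmul_def clamp01_id)

lemma tmul_in_unit: "a \<star> b \<in> {0..1}"
  unfolding tmul_def by (intro T_in_unit clamp01_in_unit)

lemma tmul_nonneg: "0 \<le> a \<star> b"
  using tmul_in_unit[of a b] by simp

lemma clamp01_tmul: "clamp01 (a \<star> b) = a \<star> b"
  by (rule clamp01_id[OF tmul_in_unit])

sublocale tmul: abel_semigroup "(\<star>)"
proof
  show "a \<star> b \<star> c = a \<star> (b \<star> c)" for a b c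
    using T_assoc[OF clamp01_in_unit clamp01_in_unit clamp01_in_unit]
    by (simp add: clamp01_tmul tmul_def[of "a \<star> b"] tmul_def[of a "b \<star> c"]) (simp add: tmul_def)
  show "a \<star> b = b \<star> a" for a b
    unfolding tmul_def by (intro T_commute clamp01_in_unit)
qed

lemma tmul_mono: "a \<le> c \<Longrightarrow> b \<le> d \<Longrightarrow> a \<star> b \<le> c \<star> d"
  unfolding tmul_def by (intro T_mono clamp01_mono clamp01_in_unit)

lemma tmul_one: "a \<in> {0..1} \<Longrightarrow> a \<star> 1 = a"
  using T_one by (simp add: tmul_eq_T)

lemma tmul_le_left: "a \<in> {0..1} \<Longrightarrow> a \<star> b \<le> a"
  using T_mono[OF _ clamp01_in_unit, of a a 1 b] T_one[of a] by (simp add: tmul_def clamp01_id)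

lemma tmul_le_right: "b \<in> {0..1} \<Longrightarrow> a \<star> b \<le> b"
  using tmul_le_left tmul.commute by metis

lemma tmul_zero [simp]: "a \<star> 0 = 0"
  using tmul_le_right[of 0 a] tmul_nonneg[of a 0] by simp

lemma zero_tmul [simp]: "0 \<star> a = 0"
  using tmul_zero tmul.commute by metis

lemma continuous_on_tmul_pair: "continuous_on UNIV (\<lambda>p. fst p \<star> snd p)"
proof -
  have "continuous_on UNIV (\<lambda>p. (clamp01 (fst p), clamp01 (snd p)))"
    unfolding clamp01_def by (intro continuous_intros)
  then have "continuous_on UNIV ((\<lambda>(a, b). T a b) \<circ> (\<lambda>p. (clamp01 (fst p), clamp01 (snd p))))"
    by (rule continuous_on_compose) (rule continuous_on_subset[OF continuous_on_T], auto)
  then show ?thesis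
    by (simp add: tmul_def o_def)
qed

lemma tendsto_tmul [tendsto_intros]:
  assumes "(f \<longlongrightarrow> a) F" and "(g \<longlongrightarrow> b) F"
  shows "((\<lambda>x. f x \<star> g x) \<longlongrightarrow> a \<star> b) F"
proof -
  have "isCont (\<lambda>p. fst p \<star> snd p) (a, b)"
    using continuous_on_tmul_pair by (simp add: continuous_on_eq_continuous_at)
  from isCont_tendsto_compose[OF this tendsto_Pair[OF assms]] show ?thesis
    by simp
qed

lemma continuous_on_tmul [continuous_intros]:
  "continuous_on S f \<Longrightarrow> continuous_on S g \<Longrightarrow> continuous_on S (\<lambda>x. f x \<star> g x)"
  unfolding continuous_on_def by (auto intro: tendsto_tmul)

lemma tmul_idempotent_absorbs:
  assumes idem: "p \<star> p = p" and x: "0 \<le> x" "x \<le> p"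
  shows "p \<star> x = x"
proof -
  have p: "p \<in> {0..1}"
    using tmul_in_unit[of p p] idem by simp
  have "p \<star> 0 \<le> x" "x \<le> p \<star> 1" and "continuous_on {0..1} (\<lambda>z. p \<star> z)"
    using x p by (simp_all add: tmul_one continuous_intros)
  then obtain z where "0 \<le> z" "z \<le> 1" and z: "p \<star> z = x"
    using IVT'[of "\<lambda>z. p \<star> z" 0 x 1] by auto
  have "p \<star> x = (p \<star> p) \<star> z"
    by (simp add: z tmul.assoc)
  then show ?thesis
    by (simp add: idem z)
qed

context
  assumes TN1: "TN1 T"
begin

lemma TN1_tmul: "a \<in> {0..1} \<Longrightarrow> b \<in> {0..1} \<Longrightarrow> a \<star> (1 - b) \<le> a - a \<star> b"
  using TN1 unfolding TN1_def by (simp add: tmul_eq_T)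

lemma TN1_idempotent_le_half:
  assumes idem: "p \<star> p = p" and "p < 1"
  shows "p \<le> 1 / 2"
proof (rule ccontr)
  assume "\<not> p \<le> 1 / 2"
  then have half: "p \<star> (1 / 2) = 1 / 2"
    by (intro tmul_idempotent_absorbs[OF idem]) auto
  have "p \<in> {0..1}"
    using tmul_in_unit[of p p] idem by simp
  then have "p \<star> (1 - 1 / 2) \<le> p - p \<star> (1 / 2)"
    by (intro TN1_tmul) auto
  with half \<open>p < 1\<close> show False
    by simp
qed

text \<open>The least \<open>c\<close> with \<open>a \<star> c = a\<close> is idempotent, hence at most \<open>1/2\<close>; then (TN1) at
  \<open>1 - c \<ge> c\<close> forces \<open>a = 0\<close>.\<close>
lemma TN1_tmul_less:
  assumes a: "0 < a" "a \<le> 1" and b: "0 \<le> b" "b < 1"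
  shows "a \<star> b < a"
proof (rule ccontr)
  assume "\<not> a \<star> b < a"
  then have ab: "a \<star> b = a"
    using tmul_le_left[of a b] a by simp
  define S where "S = {0..1} \<inter> {c. a \<star> c = a}"
  have "closed S"
    unfolding S_def by (intro closed_Int closed_atLeastAtMost closed_Collect_eq continuous_intros)
  moreover have "b \<in> S" and bdd: "bdd_below S"
    using ab b by (auto simp: S_def intro: bdd_belowI[of _ 0])
  ultimately have p: "Inf S \<in> S" "Inf S \<le> b"
    using closed_contains_Inf[of S] cInf_lower[of b S] by blast+
  define p where "p = Inf S"
  have p01: "p \<in> {0..1}" and ap: "a \<star> p = a"
    using p by (auto simp: S_def p_def)
  have "a \<star> (p \<star> p) = a"
    by (simp add: ap flip: tmul.assoc)
  then have "p \<star> p \<in> S"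
    using tmul_in_unit by (simp add: S_def)
  then have "p \<le> p \<star> p"
    unfolding p_def using bdd by (rule cInf_lower)
  then have idem: "p \<star> p = p"
    using tmul_le_left[OF p01, of p] by simp
  have "p \<le> 1 / 2"
    using TN1_idempotent_le_half[OF idem] p b by (simp add: p_def)
  then have "a \<le> a \<star> (1 - p)"
    using tmul_mono[of a a p "1 - p"] ap by simp
  also have "\<dots> \<le> a - a \<star> p"
    using TN1_tmul a p01 by simp
  finally show False
    using ap a by simp
qed

end

end

section \<open>Non-Archimedean fuzzy metric spaces\<close>

context continuous_tnorm
begin

lemma na_fuzzy_metricI:
  assumes in_unit: "\<And>x y t. x \<in> X \<Longrightarrow> y \<in> X \<Longrightarrow> 0 \<le> t \<Longrightarrow> M x y t \<in> {0..1}"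
    and at_0: "\<And>x y. x \<in> X \<Longrightarrow> y \<in> X \<Longrightarrow> M x y 0 = 0"
    and eq_1_iff: "\<And>x y. x \<in> X \<Longrightarrow> y \<in> X \<Longrightarrow> (\<forall>t>0. M x y t = 1) \<longleftrightarrow> x = y"
    and sym: "\<And>x y t. x \<in> X \<Longrightarrow> y \<in> X \<Longrightarrow> 0 < t \<Longrightarrow> M x y t = M y x t"
    and ultra: "\<And>x y z t s. x \<in> X \<Longrightarrow> y \<in> X \<Longrightarrow> z \<in> X \<Longrightarrow> 0 < t \<Longrightarrow> 0 < s \<Longrightarrow>
      M x y t \<star> M y z s \<le> M x z (max t s)"
    and left_cont: "\<And>x y t. x \<in> X \<Longrightarrow> y \<in> X \<Longrightarrow> 0 < t \<Longrightarrow> (M x y \<longlongrightarrow> M x y t) (at_left t)"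
  shows "na_fuzzy_metric X M T"
proof -
  have ultra_T: "T (M x y t) (M y z s) \<le> M x z (max t s)"
    if "x \<in> X" "y \<in> X" "z \<in> X" "0 < t" "0 < s" for x y z t s
    using ultra[OF that] in_unit that by (simp add: tmul_eq_T)
  have mono: "M x y t \<le> M x y t'" if "x \<in> X" "y \<in> X" "0 < t" "t \<le> t'" for x y t t'
    using ultra[of x y y t t'] eq_1_iff[of y y] in_unit[of x y t] that by (simp add: tmul_one)
  have triangle: "T (M x y t) (M y z s) \<le> M x z (t + s)"
    if "x \<in> X" "y \<in> X" "z \<in> X" "0 < t" "0 < s" for x y z t s
    using ultra_T[OF that] mono[of x z "max t s" "t + s"] that by (simp add: less_max_iff_disj)
  show ?thesis
    unfolding na_fuzzy_metric_def fuzzy_metric_def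
    using in_unit at_0 eq_1_iff sym ultra_T triangle left_cont by auto
qed

end

locale na_fuzzy_metric_space = continuous_tnorm +
  fixes X :: "'a set" and M :: "'a \<Rightarrow> 'a \<Rightarrow> real \<Rightarrow> real"
  assumes na_fuzzy_metric: "na_fuzzy_metric X M T"
begin

lemma M_in_unit: "x \<in> X \<Longrightarrow> y \<in> X \<Longrightarrow> 0 \<le> t \<Longrightarrow> M x y t \<in> {0..1}"
  using na_fuzzy_metric unfolding na_fuzzy_metric_def fuzzy_metric_def by auto

lemma M_at_0: "x \<in> X \<Longrightarrow> y \<in> X \<Longrightarrow> M x y 0 = 0"
  using na_fuzzy_metric unfolding na_fuzzy_metric_def fuzzy_metric_def by auto

lemma M_eq_1_iff: "x \<in> X \<Longrightarrow> y \<in> X \<Longrightarrow> (\<forall>t>0. M x y t = 1) \<longleftrightarrow> x = y"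
  using na_fuzzy_metric unfolding na_fuzzy_metric_def fuzzy_metric_def by auto

lemma M_refl: "x \<in> X \<Longrightarrow> 0 < t \<Longrightarrow> M x x t = 1"
  using M_eq_1_iff by blast

lemma M_sym: "x \<in> X \<Longrightarrow> y \<in> X \<Longrightarrow> 0 < t \<Longrightarrow> M x y t = M y x t"
  using na_fuzzy_metric unfolding na_fuzzy_metric_def fuzzy_metric_def by auto

lemma M_ultra:
  "x \<in> X \<Longrightarrow> y \<in> X \<Longrightarrow> z \<in> X \<Longrightarrow> 0 < t \<Longrightarrow> 0 < s \<Longrightarrow> M x y t \<star> M y z s \<le> M x z (max t s)"
  using na_fuzzy_metric M_in_unit unfolding na_fuzzy_metric_def by (simp add: tmul_eq_T)

lemma M_left_cont: "x \<in> X \<Longrightarrow> y \<in> X \<Longrightarrow> 0 < t \<Longrightarrow> (M x y \<longlongrightarrow> M x y t) (at_left t)"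
  using na_fuzzy_metric unfolding na_fuzzy_metric_def fuzzy_metric_def by auto

lemma M_mono: "x \<in> X \<Longrightarrow> y \<in> X \<Longrightarrow> 0 < s \<Longrightarrow> s \<le> t \<Longrightarrow> M x y s \<le> M x y t"
  using M_ultra[of x y y s t] M_refl[of y t] M_in_unit[of x y s] by (simp add: tmul_one max_def)

lemma fdiam_le: "x \<in> X \<Longrightarrow> y \<in> X \<Longrightarrow> 0 \<le> s \<Longrightarrow> fdiam X M s \<le> M x y s"
  unfolding fdiam_def using M_in_unit by (intro cInf_lower bdd_belowI[of _ 0]) fastforce+

end

section \<open>Gluing two spaces along close nets\<close>

lemma tendsto_Max_insert_image:
  fixes f :: "'i \<Rightarrow> 'b \<Rightarrow> 'c::linorder_topology"
  assumes "finite I" and "\<And>i. i \<in> I \<Longrightarrow> (f i \<longlongrightarrow> l i) F"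
  shows "((\<lambda>s. Max (insert c ((\<lambda>i. f i s) ` I))) \<longlongrightarrow> Max (insert c (l ` I))) F"
  using assms
proof (induction I rule: finite_induct)
  case (insert j I)
  have Max_eq: "Max (insert c (g ` insert j I)) = max (g j) (Max (insert c (g ` I)))"
    for g :: "'i \<Rightarrow> 'c"
    using insert(1) by (simp add: insert_commute[of c "g j"])
  have "((\<lambda>s. max (f j s) (Max (insert c ((\<lambda>i. f i s) ` I)))) \<longlongrightarrow> max (l j) (Max (insert c (l ` I)))) F"
    using insert by (intro tendsto_max) auto
  then show ?case
    by (simp only: Max_eq)
qed simp

lemma H_M_le_one:
  assumes "P \<noteq> {}" "Q \<noteq> {}" and "\<And>p q. p \<in> P \<Longrightarrow> q \<in> Q \<Longrightarrow> Mu p q t \<in> {0..1}"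
  shows "H_M Mu P Q t \<le> 1"
proof -
  obtain p0 q0 where p0: "p0 \<in> P" and q0: "q0 \<in> Q"
    using assms by blast
  have "0 \<le> (SUP q\<in>Q. Mu p q t)" if "p \<in> P" for p
    using assms that q0 by (intro cSUP_upper2[OF bdd_aboveI[of _ 1] q0]) auto
  then have "(INF p\<in>P. SUP q\<in>Q. Mu p q t) \<le> (SUP q\<in>Q. Mu p0 q t)"
    by (intro cINF_lower[OF bdd_belowI[of _ 0] p0]) auto
  also have "\<dots> \<le> 1"
    using assms p0 by (intro cSUP_least) auto
  finally show ?thesis
    unfolding H_M_def by simp
qed

lemma le_H_M:
  assumes "P \<noteq> {}" "Q \<noteq> {}" and "\<And>p q. p \<in> P \<Longrightarrow> q \<in> Q \<Longrightarrow> Mu p q t \<in> {0..1}"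
    and "\<And>p. p \<in> P \<Longrightarrow> \<exists>q\<in>Q. w \<le> Mu p q t" and "\<And>q. q \<in> Q \<Longrightarrow> \<exists>p\<in>P. w \<le> Mu p q t"
  shows "w \<le> H_M Mu P Q t"
proof -
  have "w \<le> (INF p\<in>P. SUP q\<in>Q. Mu p q t)"
  proof (rule cINF_greatest[OF assms(1)])
    fix p assume "p \<in> P"
    with assms obtain q where "q \<in> Q" "w \<le> Mu p q t" by blast
    with assms \<open>p \<in> P\<close> show "w \<le> (SUP q\<in>Q. Mu p q t)"
      by (intro cSUP_upper2[OF bdd_aboveI[of _ 1]]) auto
  qed
  moreover have "w \<le> (INF q\<in>Q. SUP p\<in>P. Mu p q t)"
  proof (rule cINF_greatest[OF assms(2)])
    fix q assume "q \<in> Q"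
    with assms obtain p where "p \<in> P" "w \<le> Mu p q t" by blast
    with assms \<open>q \<in> Q\<close> show "w \<le> (SUP p\<in>P. Mu p q t)"
      by (intro cSUP_upper2[OF bdd_aboveI[of _ 1]]) auto
  qed
  ultimately show ?thesis
    unfolding H_M_def by simp
qed

lemma (in continuous_tnorm) H_M_le_M_GH:
  assumes "admissible A MA B MB T Mu" and "A \<noteq> {}" "B \<noteq> {}" "0 \<le> t"
  shows "H_M Mu (Inl ` A) (Inr ` B) t \<le> M_GH T A MA B MB t"
proof -
  have "H_M Mu' (Inl ` A) (Inr ` B) t \<le> 1" if "admissible A MA B MB T Mu'" for Mu'
  proof -
    interpret na_fuzzy_metric_space T "Inl ` A \<union> Inr ` B" Mu'
      using that unfolding admissible_def by unfold_locales blast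
    show ?thesis
      using assms M_in_unit by (intro H_M_le_one) auto
  qed
  then have "bdd_above {H_M Mu' (Inl ` A) (Inr ` B) t | Mu'. admissible A MA B MB T Mu'}"
    by (intro bdd_aboveI[of _ 1]) blast
  then show ?thesis
    unfolding M_GH_def using assms(1) by (intro cSup_upper) blast+
qed

locale close_nets =
  continuous_tnorm T + A: na_fuzzy_metric_space T A MA + B: na_fuzzy_metric_space T B MB
  for T :: "real \<Rightarrow> real \<Rightarrow> real" and A :: "'a set" and MA and B :: "'a set" and MB +
  fixes x y :: "nat \<Rightarrow> 'a" and N :: nat and \<tau> \<delta> :: real
  assumes x_net: "fnet A MA \<tau> \<delta> N x" and y_net: "fnet B MB \<tau> \<delta> N y"
    and \<tau>_pos: "0 < \<tau>" and \<delta>_pos: "0 < \<delta>" and \<delta>_less_1: "\<delta> < 1"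
    and close_BA: "\<And>u i j. \<tau> < u \<Longrightarrow> i \<in> {1..N} \<Longrightarrow> j \<in> {1..N} \<Longrightarrow>
      MB (y i) (y j) u \<star> (1 - \<delta>) \<le> MA (x i) (x j) u"
    and close_AB: "\<And>u i j. \<tau> < u \<Longrightarrow> i \<in> {1..N} \<Longrightarrow> j \<in> {1..N} \<Longrightarrow>
      MA (x i) (x j) u \<star> (1 - \<delta>) \<le> MB (y i) (y j) u"
begin

lemma x_in: "i \<in> {1..N} \<Longrightarrow> x i \<in> A"
  using x_net unfolding fnet_def by blast

lemma y_in: "i \<in> {1..N} \<Longrightarrow> y i \<in> B"
  using y_net unfolding fnet_def by blast

lemma one_minus_\<delta>_in_unit: "1 - \<delta> \<in> {0..1}"
  using \<delta>_pos \<delta>_less_1 by simp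

text \<open>A point \<open>a\<close> of \<open>A\<close> and a point \<open>b\<close> of \<open>B\<close> are as close as the best route
  \<open>a \<rightarrow> x i \<leadsto> y i \<rightarrow> b\<close>, the jump between corresponding net points costing a factor \<open>1 - \<delta>\<close>.\<close>
definition cross :: "'a \<Rightarrow> 'a \<Rightarrow> real \<Rightarrow> real" where
  "cross a b s = (if s \<le> \<tau> then 0
     else Max (insert 0 ((\<lambda>i. MA a (x i) s \<star> (1 - \<delta>) \<star> MB (y i) b s) ` {1..N})))"

lemma cross_in_unit: "cross a b s \<in> {0..1}"
  unfolding cross_def using tmul_in_unit by (auto simp: Max_ge_iff Max_le_iff)

lemma cross_ge:
  assumes "\<tau> < s" "i \<in> {1..N}"
  shows "MA a (x i) s \<star> (1 - \<delta>) \<star> MB (y i) b s \<le> cross a b s"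
proof -
  have "MA a (x i) s \<star> (1 - \<delta>) \<star> MB (y i) b s
      \<le> Max (insert 0 ((\<lambda>i. MA a (x i) s \<star> (1 - \<delta>) \<star> MB (y i) b s) ` {1..N}))"
    using assms(2) by (intro Max_ge) auto
  also have "\<dots> = cross a b s"
    using assms(1) by (simp add: cross_def)
  finally show ?thesis .
qed

lemma cross_cases:
  obtains (zero) "cross a b s = 0"
    | (route) i where "\<tau> < s" "i \<in> {1..N}" "cross a b s = MA a (x i) s \<star> (1 - \<delta>) \<star> MB (y i) b s"
proof (cases "s \<le> \<tau>")
  case False
  have "cross a b s = Max (insert 0 ((\<lambda>i. MA a (x i) s \<star> (1 - \<delta>) \<star> MB (y i) b s) ` {1..N}))"
    using False by (simp add: cross_def)
  also have "\<dots> \<in> insert 0 ((\<lambda>i. MA a (x i) s \<star> (1 - \<delta>) \<star> MB (y i) b s) ` {1..N})"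
    by (intro Max_in) auto
  finally show ?thesis
    using False that by (auto simp: not_le)
qed (use that in \<open>simp add: cross_def\<close>)

lemma cross_ultra_AAB:
  assumes a: "a \<in> A" "a' \<in> A" and b: "b \<in> B" and ts: "0 < t" "0 < s"
  shows "MA a a' t \<star> cross a' b s \<le> cross a b (max t s)"
proof (cases rule: cross_cases[of a' b s])
  case zero
  then show ?thesis
    using cross_in_unit[of a b "max t s"] by simp
next
  case (route i)
  have "MA a a' t \<star> cross a' b s = MA a a' t \<star> MA a' (x i) s \<star> (1 - \<delta>) \<star> MB (y i) b s"
    by (simp add: route(3) ac_simps)
  also have "\<dots> \<le> MA a (x i) (max t s) \<star> (1 - \<delta>) \<star> MB (y i) b (max t s)"
    using a b ts x_in[OF route(2)] y_in[OF route(2)]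
    by (intro tmul_mono order_refl A.M_ultra B.M_mono) auto
  also have "\<dots> \<le> cross a b (max t s)"
    using route by (intro cross_ge) auto
  finally show ?thesis .
qed

lemma cross_ultra_ABA:
  assumes a: "a \<in> A" "a' \<in> A" and b: "b \<in> B" and ts: "0 < t" "0 < s"
  shows "cross a b t \<star> cross a' b s \<le> MA a a' (max t s)"
proof (cases rule: cross_cases[of a b t])
  case zero
  then show ?thesis
    using A.M_in_unit[OF a, of "max t s"] ts by simp
next
  case i: (route i)
  show ?thesis
  proof (cases rule: cross_cases[of a' b s])
    case zero
    then show ?thesis
      using A.M_in_unit[OF a, of "max t s"] ts by simp
  next
    case j: (route j)
    let ?u = "max t s" and ?c = "1 - \<delta>"
    have x: "x i \<in> A" "x j \<in> A" and y: "y i \<in> B" "y j \<in> B"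
      using i(2) j(2) x_in y_in by auto
    have "cross a b t \<star> cross a' b s
        = MA a (x i) t \<star> (?c \<star> ?c \<star> (MB (y i) b t \<star> MB b (y j) s)) \<star> MA (x j) a' s"
      using i(3) j(3) A.M_sym[OF a(2) x(2) ts(2)] B.M_sym[OF y(2) b ts(2)] by (simp add: ac_simps)
    also have "\<dots> \<le> MA a (x i) ?u \<star> (?c \<star> ?c \<star> MB (y i) (y j) ?u) \<star> MA (x j) a' ?u"
      using a b x y ts by (intro tmul_mono order_refl A.M_mono B.M_ultra) auto
    also have "\<dots> \<le> MA a (x i) ?u \<star> MA (x i) (x j) ?u \<star> MA (x j) a' ?u"
    proof -
      have "?c \<star> ?c \<star> MB (y i) (y j) ?u \<le> ?c \<star> MB (y i) (y j) ?u"
        using one_minus_\<delta>_in_unit by (intro tmul_mono tmul_le_left order_refl)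
      also have "\<dots> \<le> MA (x i) (x j) ?u"
        using close_BA[of ?u i j] i j by (simp add: tmul.commute)
      finally show ?thesis
        by (intro tmul_mono order_refl)
    qed
    also have "\<dots> \<le> MA a (x j) ?u \<star> MA (x j) a' ?u"
      using A.M_ultra[of a "x i" "x j" ?u ?u] a x ts by (intro tmul_mono order_refl) simp
    also have "\<dots> \<le> MA a a' ?u"
      using A.M_ultra[of a "x j" a' ?u ?u] a x ts by simp
    finally show ?thesis .
  qed
qed

lemma cross_ultra_BAA:
  "a \<in> A \<Longrightarrow> a' \<in> A \<Longrightarrow> b \<in> B \<Longrightarrow> 0 < t \<Longrightarrow> 0 < s \<Longrightarrow>
    cross a b t \<star> MA a a' s \<le> cross a' b (max t s)"
  using cross_ultra_AAB[of a' a b s t] A.M_sym[of a a' s] by (simp add: ac_simps max.commute)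

lemma cross_left_cont:
  assumes "0 < t" "a \<in> A" "b \<in> B"
  shows "(cross a b \<longlongrightarrow> cross a b t) (at_left t)"
proof (cases "t \<le> \<tau>")
  case True
  have "\<forall>\<^sub>F s in at_left t. cross a b t = cross a b s"
    using eventually_at_left_real[OF \<open>0 < t\<close>] by eventually_elim (use True in \<open>simp add: cross_def\<close>)
  then show ?thesis
    by (rule Lim_transform_eventually[OF tendsto_const])
next
  case False
  then have "\<tau> < t"
    by simp
  let ?F = "\<lambda>s. Max (insert 0 ((\<lambda>i. MA a (x i) s \<star> (1 - \<delta>) \<star> MB (y i) b s) ` {1..N}))"
  have "(?F \<longlongrightarrow> ?F t) (at_left t)"
    using assms x_in y_in
    by (intro tendsto_Max_insert_image tendsto_tmul tendsto_const A.M_left_cont B.M_left_cont) auto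
  moreover have "\<forall>\<^sub>F s in at_left t. ?F s = cross a b s"
    using eventually_at_left_real[OF \<open>\<tau> < t\<close>] by eventually_elim (simp add: cross_def)
  ultimately show ?thesis
    using False by (simp add: cross_def Lim_transform_eventually)
qed

lemma cross_net_point_ge:
  assumes a: "a \<in> A" and t: "\<tau> < t"
  shows "\<exists>i\<in>{1..N}. (1 - \<delta>) \<star> (1 - \<delta>) \<le> cross a (y i) t"
proof -
  obtain i where i: "i \<in> {1..N}" and "1 - \<delta> < MA a (x i) \<tau>"
    using x_net a unfolding fnet_def by blast
  then have "1 - \<delta> \<le> MA a (x i) t"
    using A.M_mono[OF a x_in[OF i] \<tau>_pos, of t] t by linarith
  then have "(1 - \<delta>) \<star> (1 - \<delta>) \<le> MA a (x i) t \<star> (1 - \<delta>) \<star> MB (y i) (y i) t"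
    using B.M_refl[OF y_in[OF i]] \<tau>_pos t tmul_in_unit by (simp add: tmul_one tmul_mono)
  also have "\<dots> \<le> cross a (y i) t"
    by (rule cross_ge[OF t i])
  finally show ?thesis
    using i by blast
qed

text \<open>Exchanging the roles of \<open>A\<close> and \<open>B\<close> leaves the cross distances unchanged
  (\<open>swap_cross\<close>), so the remaining cases of the ultrametric inequality are mirror images of
  those above; the interpretation is placed after them because only lemmas proved before it
  become available under the prefix \<open>swap\<close>.\<close>
sublocale swap: close_nets T B MB A MA y x N \<tau> \<delta>
  using x_net y_net \<tau>_pos \<delta>_pos \<delta>_less_1 close_AB close_BA by unfold_locales

lemma swap_cross: "a \<in> A \<Longrightarrow> b \<in> B \<Longrightarrow> swap.cross b a s = cross a b s"
  unfolding cross_def swap.cross_def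
  using A.M_sym[OF _ x_in] B.M_sym[OF y_in] \<tau>_pos
  by (auto simp: ac_simps intro!: arg_cong[where f = Max] image_cong)

lemma cross_ultra_BBA:
  "b \<in> B \<Longrightarrow> b' \<in> B \<Longrightarrow> a \<in> A \<Longrightarrow> 0 < t \<Longrightarrow> 0 < s \<Longrightarrow>
    MB b b' t \<star> cross a b' s \<le> cross a b (max t s)"
  using swap.cross_ultra_AAB[of b b' a t s] by (simp add: swap_cross)

lemma cross_ultra_BAB:
  "b \<in> B \<Longrightarrow> b' \<in> B \<Longrightarrow> a \<in> A \<Longrightarrow> 0 < t \<Longrightarrow> 0 < s \<Longrightarrow>
    cross a b t \<star> cross a b' s \<le> MB b b' (max t s)"
  using swap.cross_ultra_ABA[of b b' a t s] by (simp add: swap_cross)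

lemma cross_ultra_ABB:
  "b \<in> B \<Longrightarrow> b' \<in> B \<Longrightarrow> a \<in> A \<Longrightarrow> 0 < t \<Longrightarrow> 0 < s \<Longrightarrow>
    cross a b t \<star> MB b b' s \<le> cross a b' (max t s)"
  using swap.cross_ultra_BAA[of b b' a t s] by (simp add: swap_cross)

definition glued :: "'a + 'a \<Rightarrow> 'a + 'a \<Rightarrow> real \<Rightarrow> real" where
  "glued p q = (case (p, q) of
      (Inl a, Inl a') \<Rightarrow> MA a a'
    | (Inr b, Inr b') \<Rightarrow> MB b b'
    | (Inl a, Inr b) \<Rightarrow> cross a b
    | (Inr b, Inl a) \<Rightarrow> cross a b)"

lemma glued_simps [simp]:
  "glued (Inl a) (Inl a') = MA a a'" "glued (Inr b) (Inr b') = MB b b'"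
  "glued (Inl a) (Inr b) = cross a b" "glued (Inr b) (Inl a) = cross a b"
  by (simp_all add: glued_def)

lemma glued_na_fuzzy_metric: "na_fuzzy_metric (Inl ` A \<union> Inr ` B) glued T"
proof (rule na_fuzzy_metricI)
  let ?U = "Inl ` A \<union> Inr ` B"
  have cross_not_1: "(\<forall>t>0. cross a b t = 1) \<longleftrightarrow> False" for a b
    using \<tau>_pos by (auto simp: cross_def)
  show "\<And>p q t. p \<in> ?U \<Longrightarrow> q \<in> ?U \<Longrightarrow> 0 \<le> t \<Longrightarrow> glued p q t \<in> {0..1}"
    by (elim UnE imageE) (simp_all only: glued_simps A.M_in_unit B.M_in_unit cross_in_unit)
  show "\<And>p q. p \<in> ?U \<Longrightarrow> q \<in> ?U \<Longrightarrow> glued p q 0 = 0"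
    using \<tau>_pos by (auto simp: A.M_at_0 B.M_at_0 cross_def)
  show "\<And>p q. p \<in> ?U \<Longrightarrow> q \<in> ?U \<Longrightarrow> (\<forall>t>0. glued p q t = 1) \<longleftrightarrow> p = q"
    by (auto simp: A.M_eq_1_iff B.M_eq_1_iff A.M_refl B.M_refl cross_not_1)
  show "\<And>p q t. p \<in> ?U \<Longrightarrow> q \<in> ?U \<Longrightarrow> 0 < t \<Longrightarrow> glued p q t = glued q p t"
    by (auto simp: A.M_sym B.M_sym)
  show "\<And>p q r t s. p \<in> ?U \<Longrightarrow> q \<in> ?U \<Longrightarrow> r \<in> ?U \<Longrightarrow> 0 < t \<Longrightarrow> 0 < s \<Longrightarrow>
      glued p q t \<star> glued q r s \<le> glued p r (max t s)"
    by (auto simp: A.M_ultra B.M_ultra cross_ultra_AAB cross_ultra_ABA cross_ultra_BAA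
        cross_ultra_BBA cross_ultra_BAB cross_ultra_ABB)
  show "\<And>p q t. p \<in> ?U \<Longrightarrow> q \<in> ?U \<Longrightarrow> 0 < t \<Longrightarrow> (glued p q \<longlongrightarrow> glued p q t) (at_left t)"
    by (auto simp: A.M_left_cont B.M_left_cont cross_left_cont)
qed

lemma glued_admissible: "admissible A MA B MB T glued"
  unfolding admissible_def using glued_na_fuzzy_metric by simp

lemma M_GH_ge:
  assumes "A \<noteq> {}" "B \<noteq> {}" and t: "\<tau> < t"
  shows "(1 - \<delta>) \<star> (1 - \<delta>) \<le> M_GH T A MA B MB t"
proof -
  have "(1 - \<delta>) \<star> (1 - \<delta>) \<le> H_M glued (Inl ` A) (Inr ` B) t"
  proof (rule le_H_M)
    show "Inl ` A \<noteq> {}" "Inr ` B \<noteq> {}"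
      using assms by auto
    show "\<And>p q. p \<in> Inl ` A \<Longrightarrow> q \<in> Inr ` B \<Longrightarrow> glued p q t \<in> {0..1}"
      using cross_in_unit by auto
    show "\<And>p. p \<in> Inl ` A \<Longrightarrow> \<exists>q\<in>Inr ` B. (1 - \<delta>) \<star> (1 - \<delta>) \<le> glued p q t"
      using cross_net_point_ge[OF _ t] y_in by fastforce
    show "\<And>q. q \<in> Inr ` B \<Longrightarrow> \<exists>p\<in>Inl ` A. (1 - \<delta>) \<star> (1 - \<delta>) \<le> glued p q t"
      using swap.cross_net_point_ge[OF _ t] x_in swap_cross by fastforce
  qed
  also have "\<dots> \<le> M_GH T A MA B MB t"
    using assms \<tau>_pos by (intro H_M_le_M_GH glued_admissible) auto
  finally show ?thesis .
qed

end

section \<open>Convergence of the net distances\<close>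

lemma convergent_subseq_unit_interval:
  fixes v :: "nat \<Rightarrow> 'i::countable \<Rightarrow> real"
  assumes "\<And>n i. i \<in> I \<Longrightarrow> v n i \<in> {0..1}"
  shows "\<exists>r. strict_mono r \<and> (\<forall>i\<in>I. convergent (\<lambda>n. v (r n) i))"
proof -
  define w where "w n i = (if i \<in> I then v n i else 0)" for n i
  let ?cube = "PiE UNIV (\<lambda>_::'i. {0..1::real})"
  have "compactin (product_topology (\<lambda>_. euclidean) UNIV) ?cube"
    by (simp add: compactin_PiE)
  then have "seq_compact ?cube"
    by (simp add: euclidean_product_topology compact_imp_seq_compact)
  moreover have "\<forall>n. w n \<in> ?cube"
    using assms by (auto simp: w_def PiE_iff)
  ultimately obtain l r where r: "strict_mono r" and lim: "(w \<circ> r) \<longlonglongrightarrow> l"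
    by (meson seq_compactE)
  have lim_i: "(\<lambda>n. w (r n) i) \<longlonglongrightarrow> l i" for i
  proof -
    have "isCont (\<lambda>f::'i \<Rightarrow> real. f i) l"
      using continuous_on_product_coordinates[of i] continuous_on_eq_continuous_at[OF open_UNIV]
      by blast
    from isCont_tendsto_compose[OF this lim] show ?thesis
      by (simp add: o_def)
  qed
  have "convergent (\<lambda>n. v (r n) i)" if "i \<in> I" for i
    using lim_i[of i] that unfolding w_def convergent_def by auto
  with r show ?thesis
    by blast
qed

text \<open>Hypothesis (4) of the theorem for one pair \<open>(t, e)\<close>.\<close>
definition compatible_nets ::
  "(real \<Rightarrow> real \<Rightarrow> real) \<Rightarrow> (nat \<Rightarrow> 'a set) \<Rightarrow> (nat \<Rightarrow> 'a \<Rightarrow> 'a \<Rightarrow> real \<Rightarrow> real) \<Rightarrow>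
    real \<Rightarrow> real \<Rightarrow> nat \<Rightarrow> (nat \<Rightarrow> nat \<Rightarrow> 'a) \<Rightarrow> bool" where
  "compatible_nets T X M t e N x \<longleftrightarrow>
     (\<forall>n. fnet (X n) (M n) t e N (x n)) \<and>
     (\<forall>n m s i j. s > t \<longrightarrow> i \<in> {1..N} \<longrightarrow> j \<in> {1..N} \<longrightarrow>
        M n (x n i) (x n j) s < M m (x m i) (x m j) s \<longrightarrow>
        M n (x n i) (x n j) s / T (M m (x m i) (x m j) s) (1 - e)
          \<ge> M n (x n i) (x n j) t / T (M m (x m i) (x m j) t) (1 - e))"

lemma compatible_nets_in: "compatible_nets T X M t e N x \<Longrightarrow> i \<in> {1..N} \<Longrightarrow> x n i \<in> X n"
  unfolding compatible_nets_def fnet_def by blast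

lemma compatible_nets_subseq:
  "compatible_nets T X M t e N x \<Longrightarrow>
    compatible_nets T (\<lambda>n. X (r n)) (\<lambda>n. M (r n)) t e N (\<lambda>n. x (r n))"
  unfolding compatible_nets_def by blast

lemma exists_subseq_convergent_net_distances:
  fixes x :: "nat \<Rightarrow> nat \<Rightarrow> nat \<Rightarrow> 'a" and N :: "nat \<Rightarrow> nat" and \<tau> :: "nat \<Rightarrow> real"
  assumes spaces: "\<And>n. na_fuzzy_metric (X n) (M n) T"
    and x_in: "\<And>k n i. i \<in> {1..N k} \<Longrightarrow> x k n i \<in> X n" and \<tau>: "\<And>k. 0 < \<tau> k"
  obtains r where "strict_mono r"
    and "\<forall>k i j. i \<in> {1..N k} \<and> j \<in> {1..N k} \<longrightarrow> convergent (\<lambda>n. M (r n) (x k (r n) i) (x k (r n) j) (\<tau> k))"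
proof -
  define I where "I = {(k, i, j). i \<in> {1..N k} \<and> j \<in> {1..N k}}"
  have "M n (x k n i) (x k n j) (\<tau> k) \<in> {0..1}" if "(k, i, j) \<in> I" for n k i j
    using spaces that x_in \<tau> unfolding na_fuzzy_metric_def fuzzy_metric_def I_def
    by (auto simp: less_imp_le)
  then obtain r where "strict_mono r"
    and "\<forall>q\<in>I. convergent (\<lambda>n. case q of (k, i, j) \<Rightarrow> M (r n) (x k (r n) i) (x k (r n) j) (\<tau> k))"
    using convergent_subseq_unit_interval[of I "\<lambda>n (k, i, j). M n (x k n i) (x k n j) (\<tau> k)"]
    by (auto simp del: atLeastAtMost_iff)
  with that show ?thesis
    unfolding I_def by fastforce
qed

context continuous_tnorm
begin

lemma exists_margin:
  assumes "0 < c" "c \<le> 1" "0 < \<tau>"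
  shows "\<exists>\<delta>. 0 < \<delta> \<and> \<delta> < 1 \<and> \<delta> \<le> \<tau> \<and> 0 < c \<star> (1 - \<delta>)"
proof -
  have "((\<lambda>\<delta>. c \<star> (1 - \<delta>)) \<longlongrightarrow> c \<star> (1 - 0)) (at_right 0)"
    by (intro tendsto_intros)
  then have "\<forall>\<^sub>F \<delta> in at_right 0. 0 < c \<star> (1 - \<delta>)"
    using assms by (intro order_tendstoD(1)) (auto simp: tmul_one)
  moreover have "\<forall>\<^sub>F \<delta> in at_right 0. \<delta> \<in> {0<..<min 1 \<tau>}"
    using assms by (intro eventually_at_right_real) simp
  ultimately have "\<forall>\<^sub>F \<delta> in at_right (0::real). 0 < \<delta> \<and> \<delta> < 1 \<and> \<delta> \<le> \<tau> \<and> 0 < c \<star> (1 - \<delta>)"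
    by eventually_elim auto
  then show ?thesis
    by (rule eventually_happens'[rotated]) simp
qed

text \<open>This is how the ratio condition of (4) carries closeness at time \<open>t\<close> over to later times.
  The hypothesis \<open>0 < \<beta>\<^sub>0 \<star> c\<close> is essential: with \<open>x / 0 = 0\<close> the ratio condition would be
  vacuous.\<close>
lemma tmul_le_of_ratio:
  assumes "0 \<le> \<alpha>" "\<beta> \<in> {0..1}" "0 < \<beta>\<^sub>0 \<star> c" "\<beta>\<^sub>0 \<star> c \<le> \<alpha>\<^sub>0"
    and ratio: "\<alpha> < \<beta> \<Longrightarrow> \<alpha>\<^sub>0 / (\<beta>\<^sub>0 \<star> c) \<le> \<alpha> / (\<beta> \<star> c)"
  shows "\<beta> \<star> c \<le> \<alpha>"
proof (cases "\<alpha> < \<beta>")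
  case False
  then show ?thesis
    using tmul_le_left[OF assms(2), of c] by linarith
next
  case True
  have "1 \<le> \<alpha>\<^sub>0 / (\<beta>\<^sub>0 \<star> c)"
    using assms by simp
  also have "\<dots> \<le> \<alpha> / (\<beta> \<star> c)"
    using ratio[OF True] .
  finally show ?thesis
    using tmul_nonneg[of \<beta> c] \<open>0 \<le> \<alpha>\<close> by (cases "\<beta> \<star> c = 0") (auto simp: le_divide_eq)
qed

lemma eventually_tmul_le_of_tendsto:
  assumes TN1: "TN1 T" and w: "w \<longlonglongrightarrow> L" and L: "0 < L" "L \<le> 1" and b: "0 \<le> b" "b < 1"
  shows "\<forall>\<^sub>F p in sequentially \<times>\<^sub>F sequentially. w (snd p) \<star> b \<le> w (fst p)"
proof -
  define \<mu> where "\<mu> = (L \<star> b + L) / 2"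
  have "L \<star> b < L"
    using TN1_tmul_less[OF TN1 L b] .
  then have "\<mu> < L" "L \<star> b < \<mu>"
    by (simp_all add: \<mu>_def)
  moreover have "(\<lambda>m. w m \<star> b) \<longlonglongrightarrow> L \<star> b"
    using w by (intro tendsto_intros)
  ultimately have "\<forall>\<^sub>F n in sequentially. \<mu> < w n" and "\<forall>\<^sub>F m in sequentially. w m \<star> b < \<mu>"
    using w by (auto intro: order_tendstoD)
  then have "\<forall>\<^sub>F p in sequentially \<times>\<^sub>F sequentially. \<mu> < w (fst p) \<and> w (snd p) \<star> b < \<mu>"
    by (rule eventually_prodI)
  then show ?thesis
    by eventually_elim auto
qed

lemma eventually_net_distances_close:
  fixes N :: nat
  assumes TN1: "TN1 T"
    and spaces: "\<And>n. na_fuzzy_metric (X n) (M n) T" and x_in: "\<And>n i. i \<in> {1..N} \<Longrightarrow> x n i \<in> X n"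
    and \<tau>: "0 < \<tau>" and \<delta>: "0 < \<delta>" "\<delta> < 1"
    and lower: "\<And>n a b. a \<in> X n \<Longrightarrow> b \<in> X n \<Longrightarrow> c \<le> M n a b \<tau>" and c: "0 < c"
    and conv: "\<And>i j. i \<in> {1..N} \<Longrightarrow> j \<in> {1..N} \<Longrightarrow> convergent (\<lambda>n. M n (x n i) (x n j) \<tau>)"
  shows "\<exists>n0. \<forall>m\<ge>n0. \<forall>n\<ge>n0. \<forall>i\<in>{1..N}. \<forall>j\<in>{1..N}.
    M m (x m i) (x m j) \<tau> \<star> (1 - \<delta>) \<le> M n (x n i) (x n j) \<tau>"
proof -
  let ?d = "\<lambda>n i j. M n (x n i) (x n j) \<tau>"
  have "\<forall>\<^sub>F p in sequentially \<times>\<^sub>F sequentially.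
      \<forall>i\<in>{1..N}. \<forall>j\<in>{1..N}. ?d (snd p) i j \<star> (1 - \<delta>) \<le> ?d (fst p) i j"
  proof (intro eventually_ball_finite ballI)
    fix i j assume ij: "i \<in> {1..N}" "j \<in> {1..N}"
    obtain L where L: "(\<lambda>n. ?d n i j) \<longlonglongrightarrow> L"
      using conv[OF ij] by (auto simp: convergent_def)
    have "c \<le> L"
      using lower x_in ij by (intro LIMSEQ_le_const[OF L]) auto
    moreover have "?d n i j \<le> 1" for n
      using spaces x_in ij \<tau> unfolding na_fuzzy_metric_def fuzzy_metric_def by auto
    then have "L \<le> 1"
      by (intro LIMSEQ_le_const2[OF L]) auto
    ultimately show "\<forall>\<^sub>F p in sequentially \<times>\<^sub>F sequentially. ?d (snd p) i j \<star> (1 - \<delta>) \<le> ?d (fst p) i j"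
      using eventually_tmul_le_of_tendsto[OF TN1 L] c \<delta> by simp
  qed auto
  then show ?thesis
    unfolding eventually_prod_sequentially by auto
qed

lemma net_distances_close_after:
  assumes spaces: "\<And>n. na_fuzzy_metric (X n) (M n) T" and nets: "compatible_nets T X M \<tau> \<delta> N x"
    and \<tau>: "0 < \<tau>" and \<delta>: "0 < \<delta>" "\<delta> < 1"
    and lower: "\<And>n a b. a \<in> X n \<Longrightarrow> b \<in> X n \<Longrightarrow> c \<le> M n a b \<tau>" and c: "0 < c \<star> (1 - \<delta>)"
    and ij: "i \<in> {1..N}" "j \<in> {1..N}"
    and close_at_\<tau>: "M m (x m i) (x m j) \<tau> \<star> (1 - \<delta>) \<le> M n (x n i) (x n j) \<tau>"
    and u: "\<tau> < u"
  shows "M m (x m i) (x m j) u \<star> (1 - \<delta>) \<le> M n (x n i) (x n j) u"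
proof (rule tmul_le_of_ratio[OF _ _ _ close_at_\<tau>])
  let ?d = "\<lambda>n s. M n (x n i) (x n j) s"
  have d_in_unit: "?d k s \<in> {0..1}" if "0 \<le> s" for k s
    using spaces compatible_nets_in[OF nets] ij that unfolding na_fuzzy_metric_def fuzzy_metric_def
    by auto
  show "0 \<le> ?d n u" "?d m u \<in> {0..1}"
    using d_in_unit \<tau> u by auto
  have "c \<star> (1 - \<delta>) \<le> ?d m \<tau> \<star> (1 - \<delta>)"
    using lower compatible_nets_in[OF nets] ij by (intro tmul_mono) auto
  with c show "0 < ?d m \<tau> \<star> (1 - \<delta>)"
    by linarith
  have "?d m s \<star> (1 - \<delta>) = T (?d m s) (1 - \<delta>)" if "0 \<le> s" for s
    using d_in_unit that \<delta> by (intro tmul_eq_T) auto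
  with nets ij u \<tau> show "?d n u < ?d m u \<Longrightarrow> ?d n \<tau> / (?d m \<tau> \<star> (1 - \<delta>)) \<le> ?d n u / (?d m u \<star> (1 - \<delta>))"
    unfolding compatible_nets_def by simp
qed

lemma eventually_M_GH_ge:
  assumes TN1: "TN1 T"
    and spaces: "\<And>n. na_fuzzy_metric (X n) (M n) T" and nonempty: "\<And>n. X n \<noteq> {}"
    and nets: "compatible_nets T X M \<tau> \<delta> N x"
    and \<tau>: "0 < \<tau>" and \<delta>: "0 < \<delta>" "\<delta> < 1"
    and lower: "\<And>n a b. a \<in> X n \<Longrightarrow> b \<in> X n \<Longrightarrow> c \<le> M n a b \<tau>"
    and c: "0 < c" "0 < c \<star> (1 - \<delta>)"
    and conv: "\<And>i j. i \<in> {1..N} \<Longrightarrow> j \<in> {1..N} \<Longrightarrow> convergent (\<lambda>n. M n (x n i) (x n j) \<tau>)"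
  shows "\<exists>n0. \<forall>n\<ge>n0. \<forall>m\<ge>n0. \<forall>t>\<tau>. (1 - \<delta>) \<star> (1 - \<delta>) \<le> M_GH T (X n) (M n) (X m) (M m) t"
proof -
  have x_in: "\<And>n i. i \<in> {1..N} \<Longrightarrow> x n i \<in> X n"
    by (rule compatible_nets_in[OF nets])
  obtain n0 where close_at_\<tau>: "\<forall>m\<ge>n0. \<forall>n\<ge>n0. \<forall>i\<in>{1..N}. \<forall>j\<in>{1..N}.
      M m (x m i) (x m j) \<tau> \<star> (1 - \<delta>) \<le> M n (x n i) (x n j) \<tau>"
    using eventually_net_distances_close[where x = x and N = N, OF TN1 spaces x_in \<tau> \<delta> lower c(1) conv]
    by blast
  have close: "M m (x m i) (x m j) u \<star> (1 - \<delta>) \<le> M n (x n i) (x n j) u"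
    if "n0 \<le> n" "n0 \<le> m" "\<tau> < u" "i \<in> {1..N}" "j \<in> {1..N}" for n m i j u
    using net_distances_close_after[OF spaces nets \<tau> \<delta> lower c(2)] close_at_\<tau> that by blast
  have space: "na_fuzzy_metric_space T (X n) (M n)" for n
    using spaces cont_tnorm by unfold_locales
  have fnet: "fnet (X n) (M n) \<tau> \<delta> N (x n)" for n
    using nets unfolding compatible_nets_def by blast
  show ?thesis
  proof (intro exI[of _ n0] allI impI)
    fix n m and t :: real assume "n0 \<le> n" "n0 \<le> m" "\<tau> < t"
    interpret close_nets T "X n" "M n" "X m" "M m" "x n" "x m" N \<tau> \<delta>
      using space fnet \<tau> \<delta> close \<open>n0 \<le> n\<close> \<open>n0 \<le> m\<close>
      by (simp add: close_nets_def close_nets_axioms_def na_fuzzy_metric_space_def)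
    show "(1 - \<delta>) \<star> (1 - \<delta>) \<le> M_GH T (X n) (M n) (X m) (M m) t"
      using M_GH_ge[OF nonempty nonempty \<open>\<tau> < t\<close>] .
  qed
qed

lemma exists_scales:
  assumes C: "\<And>s. 0 < s \<Longrightarrow> 0 < C s \<and> C s \<le> 1"
  obtains \<tau> \<delta> :: "nat \<Rightarrow> real"
  where "\<forall>k. 0 < \<tau> k \<and> 0 < \<delta> k \<and> \<delta> k < 1 \<and> 0 < C (\<tau> k) \<star> (1 - \<delta> k)"
    and "\<tau> \<longlonglongrightarrow> 0" and "\<delta> \<longlonglongrightarrow> 0"
proof -
  define \<tau> :: "nat \<Rightarrow> real" where "\<tau> k = 1 / Suc k" for k
  have \<tau>_pos: "0 < \<tau> k" for k
    by (simp add: \<tau>_def)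
  have \<tau>_lim: "\<tau> \<longlonglongrightarrow> 0"
    unfolding \<tau>_def using LIMSEQ_inverse_real_of_nat by (simp add: inverse_eq_divide)
  have "\<forall>k. \<exists>d. 0 < d \<and> d < 1 \<and> d \<le> \<tau> k \<and> 0 < C (\<tau> k) \<star> (1 - d)"
    using exists_margin C \<tau>_pos by blast
  then obtain \<delta> where \<delta>: "\<forall>k. 0 < \<delta> k \<and> \<delta> k < 1 \<and> \<delta> k \<le> \<tau> k \<and> 0 < C (\<tau> k) \<star> (1 - \<delta> k)"
    by (rule choice[THEN exE])
  have "\<delta> \<longlonglongrightarrow> 0"
    using \<delta> by (intro tendsto_sandwich[OF _ _ tendsto_const \<tau>_lim] always_eventually allI)
      (auto intro: less_imp_le)
  with that \<tau>_pos \<tau>_lim \<delta> show ?thesis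
    by blast
qed

lemma M_GH_Cauchy_along_convergent_nets:
  fixes \<tau> \<delta> :: "nat \<Rightarrow> real" and N :: "nat \<Rightarrow> nat" and x :: "nat \<Rightarrow> nat \<Rightarrow> nat \<Rightarrow> 'a"
  assumes TN1: "TN1 T"
    and spaces: "\<And>n. na_fuzzy_metric (X n) (M n) T" and nonempty: "\<And>n. X n \<noteq> {}"
    and diam: "\<And>s n. 0 < s \<Longrightarrow> C s \<le> fdiam (X n) (M n) s" and C: "\<And>s. 0 < s \<Longrightarrow> 0 < C s \<and> C s \<le> 1"
    and scales: "\<forall>k. 0 < \<tau> k \<and> 0 < \<delta> k \<and> \<delta> k < 1 \<and> 0 < C (\<tau> k) \<star> (1 - \<delta> k)"
    and lim: "\<tau> \<longlonglongrightarrow> 0" "\<delta> \<longlonglongrightarrow> 0"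
    and nets: "\<And>k. compatible_nets T X M (\<tau> k) (\<delta> k) (N k) (x k)"
    and conv: "\<forall>k i j. i \<in> {1..N k} \<and> j \<in> {1..N k} \<longrightarrow>
      convergent (\<lambda>n. M (r n) (x k (r n) i) (x k (r n) j) (\<tau> k))"
  shows "\<forall>t>0. \<forall>e. 0 < e \<and> e < 1 \<longrightarrow>
    (\<exists>n0. \<forall>n\<ge>n0. \<forall>m\<ge>n0. M_GH T (X (r n)) (M (r n)) (X (r m)) (M (r m)) t > 1 - e)"
proof (intro allI impI)
  fix t e :: real
  assume "0 < t" and e: "0 < e \<and> e < 1"
  have "(\<lambda>k. (1 - \<delta> k) \<star> (1 - \<delta> k)) \<longlonglongrightarrow> (1 - 0) \<star> (1 - 0)"
    using lim(2) by (intro tendsto_intros)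
  then have "\<forall>\<^sub>F k in sequentially. 1 - e < (1 - \<delta> k) \<star> (1 - \<delta> k)"
    using e by (intro order_tendstoD) (auto simp: tmul_one)
  moreover have "\<forall>\<^sub>F k in sequentially. \<tau> k < t"
    using lim(1) \<open>0 < t\<close> by (rule order_tendstoD)
  ultimately have "\<forall>\<^sub>F k in sequentially. 1 - e < (1 - \<delta> k) \<star> (1 - \<delta> k) \<and> \<tau> k < t"
    by (rule eventually_conj)
  then obtain k where k: "1 - e < (1 - \<delta> k) \<star> (1 - \<delta> k)" "\<tau> k < t"
    unfolding eventually_sequentially by auto
  have lower: "C (\<tau> k) \<le> M n a b (\<tau> k)" if "a \<in> X n" "b \<in> X n" for n a b
  proof -
    interpret na_fuzzy_metric_space T "X n" "M n"
      using spaces cont_tnorm by unfold_locales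
    show ?thesis
      using diam[of "\<tau> k" n] fdiam_le[OF that] scales by (meson less_imp_le order_trans)
  qed
  have "\<exists>n0. \<forall>n\<ge>n0. \<forall>m\<ge>n0. \<forall>t'>\<tau> k.
      (1 - \<delta> k) \<star> (1 - \<delta> k) \<le> M_GH T (X (r n)) (M (r n)) (X (r m)) (M (r m)) t'"
  proof (rule eventually_M_GH_ge[where c = "C (\<tau> k)"])
    show "compatible_nets T (\<lambda>n. X (r n)) (\<lambda>n. M (r n)) (\<tau> k) (\<delta> k) (N k) (\<lambda>n. x k (r n))"
      using compatible_nets_subseq[OF nets] .
  qed (use TN1 spaces nonempty scales lower C conv in auto)
  with k show "\<exists>n0. \<forall>n\<ge>n0. \<forall>m\<ge>n0. M_GH T (X (r n)) (M (r n)) (X (r m)) (M (r m)) t > 1 - e"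
    by (meson less_le_trans)
qed

end

theorem mainTheorem7:
  fixes T :: "real \<Rightarrow> real \<Rightarrow> real"
    and X :: "nat \<Rightarrow> 'a set"
    and M :: "nat \<Rightarrow> 'a \<Rightarrow> 'a \<Rightarrow> real \<Rightarrow> real"
  assumes tnorm: "cont_tnorm T"
    and spaces: "\<And>n. na_fuzzy_metric (X n) (M n) T"
    and nonempty: "\<And>n. X n \<noteq> {}"
    and compact: "\<And>n. fcompact (X n) (M n) (X n)"
    and tn1: "TN1 T"
    and diam: "\<exists>C :: real \<Rightarrow> real.
        (\<forall>s>0. \<forall>s'>0. s \<le> s' \<longrightarrow> C s \<le> C s') \<and>
        (\<forall>s>0. (C \<longlongrightarrow> C s) (at_left s)) \<and>
        (\<forall>s>0. 0 < C s \<and> C s \<le> 1) \<and>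
        (\<forall>s>0. \<forall>n. C s \<le> fdiam (X n) (M n) s)"
    and cov_net: "\<exists>N :: real \<Rightarrow> real \<Rightarrow> nat.
        (\<forall>t>0. \<forall>e. 0 < e \<and> e < 1 \<longrightarrow> (\<forall>n. Cov (X n) (M n) e t \<le> N e t)) \<and>
        (\<forall>t>0. \<forall>e. 0 < e \<and> e < 1 \<longrightarrow>
          (\<exists>x :: nat \<Rightarrow> nat \<Rightarrow> 'a.
             (\<forall>n. fnet (X n) (M n) t e (N e t) (x n)) \<and>
             (\<forall>n m s i j. s > t \<longrightarrow> i \<in> {1..N e t} \<longrightarrow> j \<in> {1..N e t} \<longrightarrow>
                M n (x n i) (x n j) s < M m (x m i) (x m j) s \<longrightarrow>
                M n (x n i) (x n j) s / T (M m (x m i) (x m j) s) (1 - e)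
                  \<ge> M n (x n i) (x n j) t / T (M m (x m i) (x m j) t) (1 - e))))"
  shows "\<exists>r :: nat \<Rightarrow> nat. strict_mono r \<and>
           (\<forall>t>0. \<forall>e. 0 < e \<and> e < 1 \<longrightarrow>
              (\<exists>n0. \<forall>n\<ge>n0. \<forall>m\<ge>n0.
                 M_GH T (X (r n)) (M (r n)) (X (r m)) (M (r m)) t > 1 - e))"
proof -
  interpret continuous_tnorm T
    by (rule continuous_tnorm.intro[OF tnorm])
  obtain C where C: "\<And>s. 0 < s \<Longrightarrow> 0 < C s \<and> C s \<le> 1"
    and C_diam: "\<And>s n. 0 < s \<Longrightarrow> C s \<le> fdiam (X n) (M n) s"
    using diam by blast
  obtain N where nets: "\<And>t e. 0 < t \<Longrightarrow> 0 < e \<Longrightarrow> e < 1 \<Longrightarrow> \<exists>x. compatible_nets T X M t e (N e t) x"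
    using cov_net unfolding compatible_nets_def by blast
  obtain \<tau> \<delta> where scales: "\<forall>k. 0 < \<tau> k \<and> 0 < \<delta> k \<and> \<delta> k < 1 \<and> 0 < C (\<tau> k) \<star> (1 - \<delta> k)"
    and lim: "\<tau> \<longlonglongrightarrow> 0" "\<delta> \<longlonglongrightarrow> 0"
    by (rule exists_scales[OF C])
  have "\<forall>k. \<exists>x. compatible_nets T X M (\<tau> k) (\<delta> k) (N (\<delta> k) (\<tau> k)) x"
    using nets scales by blast
  then obtain x where x: "\<And>k. compatible_nets T X M (\<tau> k) (\<delta> k) (N (\<delta> k) (\<tau> k)) (x k)"
    by metis
  have "\<And>k n i. i \<in> {1..N (\<delta> k) (\<tau> k)} \<Longrightarrow> x k n i \<in> X n" and "\<And>k. 0 < \<tau> k"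
    using compatible_nets_in[OF x] scales by blast+
  then obtain r where r: "strict_mono r" and conv: "\<forall>k i j. i \<in> {1..N (\<delta> k) (\<tau> k)} \<and>
      j \<in> {1..N (\<delta> k) (\<tau> k)} \<longrightarrow> convergent (\<lambda>n. M (r n) (x k (r n) i) (x k (r n) j) (\<tau> k))"
    by (rule exists_subseq_convergent_net_distances[OF spaces])
  show ?thesis
    by (intro exI[of _ r] conjI r
        M_GH_Cauchy_along_convergent_nets[OF tn1 spaces nonempty C_diam C scales lim x conv])
qed

end
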